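(* $\mathfrak{r}_{\mathrm{game}}^{\mathrm{I}} \ge \max\{\mathfrak{r},\mathfrak{d}\}$.
   Context: For $x\subseteq\omega$ and $y\in[\omega]^\omega$, $y$ reaps $x$ if $y\subseteq^* x$ or $y\subseteq^*\omega\setminus x$ (where $A\subseteq^* B$ means $A\setminus B$ is finite). $\mathfrak{r}$ is the least size of $\mathcal{A}\subseteq[\omega]^\omega$ such that every $x\subseteq\omega$ is reaped by some member of $\mathcal{A}$. $\mathfrak{d}$ is the dominating number (least size of a family $\mathcal{D}\subseteq\omega^\omega$ such that every $x\in\omega^\omega$ is eventually dominated by some member of $\mathcal{D}$). For $\mathcal{A}\subseteq[\omega]^\omega$, the reaping game with respect to $\mathcal{A}$: at round $k$, Player I plays $n_k\in\omega$ with $n_0<n_1<\cdots$, and then Player II plays $i_k\in\{0,1\}$. Player II wins iff there is $A\in\mathcal{A}$ such that $\{n_k:k\in\omega\}\cap A=\{n_k: i_k=1\}$ and $A$ reaps $\{n_k:k\in\omega\}$. $\mathfrak{r}_{\mathrm{game}}^{\mathrm{I}}$ is the least $|\mathcal{A}|$ such that Player I has no winning strategy in the reaping game with respect to $\mathcal{A}$. *)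

theory Defs
  imports Main
begin

definition reaps :: "nat set \<Rightarrow> nat set \<Rightarrow> bool" where
  "reaps y x \<longleftrightarrow> infinite y \<and> (finite (y - x) \<or> finite (y - (UNIV - x)))"

text \<open>Reaping family: a family of infinite sets reaping every subset of omega.
  The reaping number r is the least cardinality of such a family.\<close>
definition reaping_family :: "nat set set \<Rightarrow> bool" where
  "reaping_family R \<longleftrightarrow> (\<forall>A\<in>R. infinite A) \<and> (\<forall>x. \<exists>A\<in>R. reaps A x)"

text \<open>Dominating family (eventual domination, f \<le>* g).
  The dominating number d is the least cardinality of such a family.\<close>
definition dominating_family :: "(nat \<Rightarrow> nat) set \<Rightarrow> bool" where
  "dominating_family D \<longleftrightarrow> (\<forall>f. \<exists>g\<in>D. \<forall>\<^sub>F n in sequentially. f n \<le> g n)"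

text \<open>A strategy for Player I maps the list of Player II's previous moves
  (i_0,...,i_{k-1}) to Player I's move n_k.  (Player I's own earlier moves are
  determined by these.)  The strategy must obey the rule n_0 < n_1 < ...\<close>
definition legal_strategy_I :: "(bool list \<Rightarrow> nat) \<Rightarrow> bool" where
  "legal_strategy_I \<sigma> \<longleftrightarrow> (\<forall>h b. \<sigma> h < \<sigma> (h @ [b]))"

definition play_I :: "(bool list \<Rightarrow> nat) \<Rightarrow> (nat \<Rightarrow> bool) \<Rightarrow> nat \<Rightarrow> nat" where
  "play_I \<sigma> y k = \<sigma> (map y [0..<k])"

definition II_wins :: "nat set set \<Rightarrow> (nat \<Rightarrow> nat) \<Rightarrow> (nat \<Rightarrow> bool) \<Rightarrow> bool" where
  "II_wins \<A> n i \<longleftrightarrow>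
     (\<exists>A\<in>\<A>. range n \<inter> A = {n k | k. i k} \<and> reaps A (range n))"

definition I_has_winning_strategy :: "nat set set \<Rightarrow> bool" where
  "I_has_winning_strategy \<A> \<longleftrightarrow>
     (\<exists>\<sigma>. legal_strategy_I \<sigma> \<and> (\<forall>y. \<not> II_wins \<A> (play_I \<sigma> y) y))"

end

theory Submission
  imports Defs "HOL-Library.Infinite_Set"
begin

text \<open>Against a family \<A> that defeats every strategy of Player I, two strategies
  suffice. Enumerating a fixed infinite set x in increasing order, Player I forces
  Player II to produce a member of \<A> reaping x, so \<A> is itself a reaping family.
  Given f, let F be an increasing majorant of f with F x > x; Player I plays
  n_{k+1} = F n_k after an answer 1 and n_{k+1} = n_k + 1 after an answer 0. If
  Player II answers 0 from some point on, the play covers a final segment of \<omega>,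
  which an infinite A cannot almost avoid; hence A \<subseteq>* {n_k}, and then A meets the
  play only at moves answered 1. So for large m the first two elements a < b of A
  above m satisfy a = n_j with answer 1, whence b \<ge> n_{j+1} = F n_j \<ge> F m \<ge> f m:
  the functions m \<mapsto> next_A (next_A m), A \<in> \<A>, form a dominating family.\<close>

definition next_in :: "nat set \<Rightarrow> nat \<Rightarrow> nat" where
  "next_in A m = (LEAST a. a \<in> A \<and> m < a)"

lemma next_in_mem_greater:
  assumes "infinite A"
  shows "next_in A m \<in> A" "m < next_in A m"
proof -
  have "\<exists>a. a \<in> A \<and> m < a" using assms infinite_nat_iff_unbounded by auto
  from LeastI_ex[OF this] show "next_in A m \<in> A" "m < next_in A m"
    unfolding next_in_def by auto
qed

lemma reaps_finite: "infinite A \<Longrightarrow> finite x \<Longrightarrow> reaps A x"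
  unfolding reaps_def using finite_subset[of "A - (UNIV - x)" x] by blast

lemma legal_enumerate_strategy:
  "infinite x \<Longrightarrow> legal_strategy_I (\<lambda>h. enumerate x (length h))"
  unfolding legal_strategy_I_def using enumerate_mono by simp

lemma play_enumerate_strategy: "play_I (\<lambda>h. enumerate x (length h)) y = enumerate x"
  unfolding play_I_def by auto

lemma reaps_if_no_winning_strategy:
  assumes "\<not> I_has_winning_strategy \<A>" and "infinite x"
  shows "\<exists>A\<in>\<A>. reaps A x"
proof -
  obtain y where "II_wins \<A> (play_I (\<lambda>h. enumerate x (length h)) y) y"
    using assms legal_enumerate_strategy unfolding I_has_winning_strategy_def by blast
  then show ?thesis
    unfolding II_wins_def play_enumerate_strategy range_enumerate[OF assms(2)] by blast
qed

lemma reaping_family_if_no_winning_strategy: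
  assumes "\<forall>A\<in>\<A>. infinite A" and "\<not> I_has_winning_strategy \<A>"
  shows "reaping_family \<A>"
  unfolding reaping_family_def
proof (intro conjI allI)
  fix x :: "nat set"
  show "\<exists>A\<in>\<A>. reaps A x"
  proof (cases "finite x")
    case True
    obtain A where "A \<in> \<A>"
      using reaps_if_no_winning_strategy[OF assms(2) infinite_UNIV_nat] by blast
    then show ?thesis using True assms(1) reaps_finite by blast
  next
    case False
    then show ?thesis by (rule reaps_if_no_winning_strategy[OF assms(2)])
  qed
next
  show "\<forall>A\<in>\<A>. infinite A" by (rule assms(1))
qed

text \<open>\<open>jump_moves\<close> reads a history latest answer first, whereas strategies receive
  it in chronological order.\<close>

primrec jump_moves :: "(nat \<Rightarrow> nat) \<Rightarrow> bool list \<Rightarrow> nat" where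
  "jump_moves F [] = 0"
| "jump_moves F (b # h) = (if b then F (jump_moves F h) else jump_moves F h + 1)"

definition jump_strategy :: "(nat \<Rightarrow> nat) \<Rightarrow> bool list \<Rightarrow> nat" where
  "jump_strategy F h = jump_moves F (rev h)"

lemma legal_jump_strategy: "(\<And>x. x < F x) \<Longrightarrow> legal_strategy_I (jump_strategy F)"
  unfolding legal_strategy_I_def jump_strategy_def by simp

lemma play_jump_strategy:
  "play_I (jump_strategy F) y 0 = 0"
  "play_I (jump_strategy F) y (Suc k) =
     (if y k then F (play_I (jump_strategy F) y k) else play_I (jump_strategy F) y k + 1)"
  unfolding play_I_def jump_strategy_def by simp_all

lemma final_segment_subset_range:
  fixes n :: "nat \<Rightarrow> nat"
  assumes step: "\<And>k. \<not> y k \<Longrightarrow> n (Suc k) = n k + 1" and "finite {k. y k}"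
  shows "\<exists>c. {c..} \<subseteq> range n"
proof -
  obtain B where B: "\<And>k. y k \<Longrightarrow> k \<le> B"
    using \<open>finite {k. y k}\<close> finite_nat_set_iff_bounded_le by auto
  define K where "K = Suc B"
  have K: "\<not> y k" if "K \<le> k" for k using B[of k] that unfolding K_def by linarith
  have n_lin: "n (K + d) = n K + d" for d by (induction d) (simp_all add: step K)
  have "a \<in> range n" if "n K \<le> a" for a
    using n_lin[of "a - n K"] that by (metis le_add_diff_inverse rangeI)
  then show ?thesis by blast
qed

lemma reaper_almost_in_play:
  fixes n :: "nat \<Rightarrow> nat"
  assumes "infinite A" and n_mono: "strict_mono n"
    and step: "\<And>k. \<not> y k \<Longrightarrow> n (Suc k) = n k + 1"
    and hits: "range n \<inter> A = {n k | k. y k}"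
    and "reaps A (range n)"
  shows "finite (A - range n)"
proof (rule ccontr)
  assume "infinite (A - range n)"
  then have "finite (A - (UNIV - range n))" using \<open>reaps A (range n)\<close> unfolding reaps_def by blast
  moreover have "A - (UNIV - range n) = n ` {k. y k}" using hits by blast
  ultimately have "finite (n ` {k. y k})" by simp
  then have "finite {k. y k}"
    using finite_imageD inj_on_subset[OF strict_mono_imp_inj_on[OF n_mono] subset_UNIV] by blast
  then obtain c where "{c..} \<subseteq> range n" using final_segment_subset_range step by blast
  then have "A - range n \<subseteq> {..<c}" using not_less by blast
  with \<open>infinite (A - range n)\<close> show False using finite_subset by blast
qed

lemma double_next_dominates:
  fixes n :: "nat \<Rightarrow> nat"
  assumes "infinite A" and "mono F"
    and n_mono: "strict_mono n"
    and jump: "\<And>k. y k \<Longrightarrow> n (Suc k) = F (n k)"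
    and hits: "range n \<inter> A = {n k | k. y k}"
    and almost_in: "finite (A - range n)"
  shows "\<forall>\<^sub>F m in sequentially. F m \<le> next_in A (next_in A m)"
proof -
  obtain B where B: "\<And>a. a \<in> A - range n \<Longrightarrow> a \<le> B"
    using almost_in finite_nat_set_iff_bounded_le by meson
  have in_range: "c \<in> range n" if "c \<in> A" "B < c" for c
    using B[of c] that by fastforce
  have "F m \<le> next_in A (next_in A m)" if "B < m" for m
  proof -
    let ?a = "next_in A m" and ?b = "next_in A (next_in A m)"
    have a: "?a \<in> A" "m < ?a" and b: "?b \<in> A" "?a < ?b"
      using next_in_mem_greater[OF \<open>infinite A\<close>] by blast+
    then have "?a \<in> range n \<inter> A" "?b \<in> range n"
      using in_range[of ?a] in_range[of ?b] \<open>B < m\<close> by auto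
    then obtain j j' where j: "?a = n j" "y j" and j': "?b = n j'" using hits by blast
    have "j < j'" using b(2) j j' n_mono by (metis strict_mono_less)
    then have "F (n j) \<le> ?b" using jump[OF j(2)] j' n_mono by (metis Suc_leI strict_mono_less_eq)
    moreover have "F m \<le> F (n j)" using \<open>mono F\<close> a(2) j(1) by (simp add: monoD)
    ultimately show ?thesis by linarith
  qed
  then show ?thesis unfolding eventually_sequentially by (meson Suc_le_lessD)
qed

lemma increasing_majorant:
  fixes f :: "nat \<Rightarrow> nat"
  obtains F where "mono F" "\<And>x. f x \<le> F x" "\<And>x. x < F x"
proof
  show "mono (\<lambda>x. x + 1 + sum f {..x})" by (intro monoI add_mono sum_mono2) auto
  show "f x \<le> x + 1 + sum f {..x}" for x using member_le_sum[of x "{..x}" f] by simp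
qed simp

lemma dominating_family_if_no_winning_strategy:
  assumes "\<forall>A\<in>\<A>. infinite A" and "\<not> I_has_winning_strategy \<A>"
  shows "dominating_family ((\<lambda>A m. next_in A (next_in A m)) ` \<A>)"
  unfolding dominating_family_def
proof
  fix f :: "nat \<Rightarrow> nat"
  obtain F where F: "mono F" "\<And>x. f x \<le> F x" "\<And>x. x < F x"
    using increasing_majorant by metis
  obtain y where "II_wins \<A> (play_I (jump_strategy F) y) y"
    using assms(2) legal_jump_strategy[OF F(3)] unfolding I_has_winning_strategy_def by blast
  moreover define n where "n = play_I (jump_strategy F) y"
  ultimately obtain A where A: "A \<in> \<A>" "range n \<inter> A = {n k | k. y k}" "reaps A (range n)"
    unfolding II_wins_def by blast
  have step: "n (Suc k) = (if y k then F (n k) else n k + 1)" for k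
    unfolding n_def by (rule play_jump_strategy(2))
  have n_mono: "strict_mono n" unfolding strict_mono_Suc_iff by (simp add: step F(3))
  have "infinite A" using A(1) assms(1) by blast
  have no_jump: "\<And>k. \<not> y k \<Longrightarrow> n (Suc k) = n k + 1"
    and jump: "\<And>k. y k \<Longrightarrow> n (Suc k) = F (n k)" using step by simp_all
  have "finite (A - range n)"
    by (rule reaper_almost_in_play[OF \<open>infinite A\<close> n_mono no_jump A(2,3)])
  then have "\<forall>\<^sub>F m in sequentially. F m \<le> next_in A (next_in A m)"
    using double_next_dominates[OF \<open>infinite A\<close> F(1) n_mono] jump A(2) by blast
  then have "\<forall>\<^sub>F m in sequentially. f m \<le> next_in A (next_in A m)"
    by (rule eventually_mono) (use F(2) le_trans in blast)
  then show "\<exists>g\<in>(\<lambda>A m. next_in A (next_in A m)) ` \<A>. \<forall>\<^sub>F m in sequentially. f m \<le> g m"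
    using A(1) by (intro bexI[OF _ imageI])
qed

theorem mainTheorem5:
  fixes \<A> :: "nat set set"
  assumes "\<forall>A\<in>\<A>. infinite A"
    and "\<not> I_has_winning_strategy \<A>"
  shows "(\<exists>R. reaping_family R \<and> (card_of R, card_of \<A>) \<in> ordLeq)
       \<and> (\<exists>D. dominating_family D \<and> (card_of D, card_of \<A>) \<in> ordLeq)"
proof
  show "\<exists>R. reaping_family R \<and> (card_of R, card_of \<A>) \<in> ordLeq"
    using reaping_family_if_no_winning_strategy[OF assms] card_of_refl ordIso_imp_ordLeq
    by blast
  show "\<exists>D. dominating_family D \<and> (card_of D, card_of \<A>) \<in> ordLeq"
    using dominating_family_if_no_winning_strategy[OF assms] card_of_image by blast
qed

end
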